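(* Let $q=5^m$ with $m$ even, let $\alpha\in\mathbb{F}_q$ be a non-square, and let $Z\in\mathbb{F}_{q^2}\setminus\mathbb{F}_q$ satisfy $Z^2=\alpha$. Let $f(x)=x^{q+2}$ on $\mathbb{F}_{q^2}$ and for $b\in\mathbb{F}_{q^2}$ put $\beta(b)=\beta_f(1,\tfrac14 b)$. Then for every $d\in\mathbb{F}_q^*$: $\beta(2dZ)=3$ if $d^2\alpha+2\in C_0$, and $\beta(2dZ)\in\{0,3\}$ if $d^2\alpha+2\in C_1$.
   Context: $\beta_f(a,b)$ is the number of $(x,y)\in\mathbb{F}_{q^2}^2$ with $f(x)-f(y)=b$ and $f(x+a)-f(y+a)=b$. $C_0$ (resp. $C_1$) denotes the set of nonzero squares (resp. non-squares) in $\mathbb{F}_q^*$. *)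

theory Defs
  imports Main
begin

text \<open>The ambient field \<open>F_{q^2}\<close> is a finite field type 'a with CARD('a) = q^2.
  The subfield \<open>F_q\<close> is the set of fixed points of the Frobenius x \<mapsto> x^q.\<close>

definition subfield_q :: "nat \<Rightarrow> 'a::field set" where
  "subfield_q q = {x. x ^ q = x}"

definition C0 :: "nat \<Rightarrow> 'a::field set" where
  "C0 q = {y ^ 2 | y. y \<in> subfield_q q \<and> y \<noteq> 0}"

definition C1 :: "nat \<Rightarrow> 'a::field set" where
  "C1 q = (subfield_q q - {0}) - C0 q"

definition beta_f :: "('a::{field,finite} \<Rightarrow> 'a) \<Rightarrow> 'a \<Rightarrow> 'a \<Rightarrow> nat" where
  "beta_f f a b = card {(x, y). f x - f y = b \<and> f (x + a) - f (y + a) = b}"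

end

theory Submission
  imports Defs "HOL-Number_Theory.Number_Theory" "HOL-Computational_Algebra.Polynomial"
begin

text \<open>Write \<open>x = a + b Z\<close> with \<open>a, b \<in> F\<^sub>q\<close>. Then \<open>x ^ (q + 2) = N(x) x\<close> with the norm
  \<open>N(x) = a\<^sup>2 - \<alpha> b\<^sup>2 \<in> F\<^sub>q\<close>, so both boomerang conditions become polynomial equations over
  \<open>F\<^sub>q\<close>. In characteristic 5 we have \<open>2 d Z / 4 = 3 d Z\<close>, and comparing coordinates shows that
  every solution \<open>(x, y)\<close> has \<open>y = -x - 1\<close>; so \<open>\<beta>(2 d Z)\<close> counts the solutions of
  \<open>f x + f (x + 1) = 3 d Z\<close>. Writing \<open>x = 2 (e + 1) + b Z\<close>, these are the \<open>x = 2 (e + 1) + 2 d Z\<close>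
  with \<open>e \<in> F\<^sub>q\<^sup>*\<close>, \<open>e\<^sup>2 = \<alpha> d\<^sup>2 + 2\<close> (two if \<open>\<alpha> d\<^sup>2 + 2 \<in> C\<^sub>0\<close>, none if it is in \<open>C\<^sub>1\<close>),
  and the \<open>x = 2 + b Z\<close> with \<open>b \<in> F\<^sub>q\<close> a root of \<open>\<alpha> b\<^sup>3 + b = d\<close>. For such a root \<open>r\<close>, the
  remaining quadratic factor has discriminant \<open>2 \<alpha> (\<alpha> r\<^sup>2 - 2)\<close>, while
  \<open>\<alpha> d\<^sup>2 + 2 = (\<alpha> r\<^sup>2 + 2)\<^sup>2 (\<alpha> r\<^sup>2 - 2)\<close>. As \<open>\<alpha>\<close> is a non-square and \<open>2\<close> a square, the cubic has
  exactly one root in \<open>F\<^sub>q\<close> if \<open>\<alpha> d\<^sup>2 + 2 \<in> C\<^sub>0\<close> (one exists by Cardano's formula), and none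
  or three if \<open>\<alpha> d\<^sup>2 + 2 \<in> C\<^sub>1\<close>.\<close>

section \<open>Finite fields\<close>

lemma power_card_minus_one_eq_1:
  fixes x :: "'a :: {field,finite}"
  assumes "x \<noteq> 0"
  shows "x ^ (card (UNIV :: 'a set) - 1) = 1"
proof -
  define U where "U = (UNIV :: 'a set) - {0}"
  have card_U: "card U = card (UNIV :: 'a set) - 1"
    unfolding U_def by (simp add: card_Diff_singleton)
  have "(\<Prod>y\<in>U. x * y) = x ^ card U * \<Prod>U" by (simp add: prod.distrib)
  moreover have "(\<Prod>y\<in>U. x * y) = \<Prod>U"
    unfolding U_def
    by (rule prod.reindex_bij_witness[of _ "\<lambda>y. y / x" "\<lambda>y. x * y"]) (use assms in auto)
  moreover have "\<Prod>U \<noteq> (0::'a)" unfolding U_def by (subst prod_zero_iff) auto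
  ultimately show ?thesis using card_U by simp
qed

lemma power_card_eq_self:
  fixes x :: "'a :: {field,finite}"
  shows "x ^ card (UNIV :: 'a set) = x"
proof (cases "x = 0")
  case False
  have "x ^ card (UNIV :: 'a set) = x * x ^ (card (UNIV :: 'a set) - 1)"
    using finite_UNIV_card_ge_0[where 'a='a] by (cases "card (UNIV :: 'a set)") auto
  with power_card_minus_one_eq_1[OF False] show ?thesis by simp
qed (use finite_UNIV_card_ge_0[where 'a='a] in simp)

lemma card_power_eq_le:
  fixes c :: "'a :: field"
  assumes "n > 0"
  shows "card {x. x ^ n = c} \<le> n"
proof -
  define p where "p = monom (1::'a) n + [:-c:]"
  have deg: "degree p = n"
    unfolding p_def using assms by (subst degree_add_eq_left) (auto simp: degree_monom_eq)
  hence "p \<noteq> 0" using assms by auto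
  have "{x. x ^ n = c} = {x. poly p x = 0}" by (auto simp: p_def poly_monom)
  then show ?thesis using card_poly_roots_bound[OF \<open>p \<noteq> 0\<close>] deg by simp
qed

lemma card_le_mult_card_if_fibres_le:
  assumes "finite B" "f ` A \<subseteq> B" "\<And>y. y \<in> B \<Longrightarrow> card {x\<in>A. f x = y} \<le> k"
    and "\<And>y. finite {x\<in>A. f x = y}"
  shows "card A \<le> k * card B"
proof -
  have "A = (\<Union>y\<in>B. {x\<in>A. f x = y})" using assms(2) by auto
  hence "card A \<le> (\<Sum>y\<in>B. card {x\<in>A. f x = y})" by (metis assms(1) card_UN_le)
  also have "\<dots> \<le> (\<Sum>y\<in>B. k)" by (rule sum_mono) (use assms(3) in auto)
  finally show ?thesis by (simp add: mult.commute)
qed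

text \<open>Euler's criterion for \<open>n\<close>-th powers: the \<open>n\<close>-th powers of the unit group fill the
  at most \<open>(|F| - 1) / n\<close> roots of \<open>y ^ ((|F| - 1) / n) = 1\<close>, since every fibre of
  \<open>s \<mapsto> s ^ n\<close> has at most \<open>n\<close> elements.\<close>
lemma ex_nth_root_if_power_eq_1:
  fixes w :: "'a :: {field,finite}"
  assumes n: "n > 0" "n dvd card (UNIV :: 'a set) - 1"
    and w: "w \<noteq> 0" "w ^ ((card (UNIV :: 'a set) - 1) div n) = 1"
  shows "\<exists>s. s ^ n = w"
proof -
  define j where "j = (card (UNIV :: 'a set) - 1) div n"
  have card_units: "card (UNIV :: 'a set) - 1 = j * n" using n unfolding j_def by auto
  have "card {0::'a, 1} \<le> card (UNIV :: 'a set)" by (rule card_mono) auto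
  hence "j > 0" using card_units by (cases j) auto
  define U where "U = (UNIV :: 'a set) - {0}"
  define K where "K = {y::'a. y ^ j = 1}"
  define I where "I = (\<lambda>s. s ^ n) ` U"
  have "I \<subseteq> K"
  proof
    fix y assume "y \<in> I"
    then obtain s where s: "s \<noteq> 0" "y = s ^ n" unfolding I_def U_def by auto
    have "y ^ j = s ^ (card (UNIV :: 'a set) - 1)"
      using s card_units by (simp add: power_mult[symmetric] mult.commute)
    with power_card_minus_one_eq_1[OF s(1)] show "y \<in> K" unfolding K_def by simp
  qed
  have "card U = card (UNIV :: 'a set) - 1" unfolding U_def by (simp add: card_Diff_singleton)
  moreover have "card U \<le> n * card I"
  proof (rule card_le_mult_card_if_fibres_le[where f = "\<lambda>s. s ^ n"])
    fix y
    have "card {x \<in> U. x ^ n = y} \<le> card {x. x ^ n = y}" by (rule card_mono) auto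
    also have "\<dots> \<le> n" by (rule card_power_eq_le[OF n(1)])
    finally show "card {x \<in> U. x ^ n = y} \<le> n" .
  qed (auto simp: I_def)
  ultimately have "j \<le> card I" using card_units n(1) by (simp add: mult.commute)
  hence "card K \<le> card I" using card_power_eq_le[OF \<open>j > 0\<close>, of "1::'a"] unfolding K_def by linarith
  hence "I = K" using \<open>I \<subseteq> K\<close> card_mono[OF _ \<open>I \<subseteq> K\<close>] by (intro card_subset_eq) auto
  moreover have "w \<in> K" using w unfolding K_def j_def by simp
  ultimately show ?thesis unfolding I_def by auto
qed

section \<open>Quadratic extensions of odd characteristic\<close>

lemma mem_C0_iff: "D \<in> C0 q \<longleftrightarrow> (\<exists>y. y ^ q = y \<and> y \<noteq> 0 \<and> D = y\<^sup>2)"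
  by (auto simp: C0_def subfield_q_def)

lemma mem_C1_iff: "D \<in> C1 q \<longleftrightarrow> D ^ q = D \<and> D \<noteq> 0 \<and> (\<forall>y. y ^ q = y \<longrightarrow> D \<noteq> y\<^sup>2)"
  by (auto simp: C1_def mem_C0_iff subfield_q_def)

text \<open>The type \<open>'a\<close> is the field with \<open>q\<^sup>2\<close> elements: additivity of \<open>x \<mapsto> x ^ q\<close> says that \<open>q\<close> is
  a power of the characteristic, \<open>F\<^sub>q\<close> is the set of its fixed points, and \<open>1, Z\<close> is a basis
  over \<open>F\<^sub>q\<close>.\<close>
locale quadratic_extension =
  fixes q :: nat and \<alpha> Z :: "'a::{field,finite}"
  assumes card_UNIV: "card (UNIV :: 'a set) = q ^ 2"
    and frobenius_add: "\<And>x y :: 'a. (x + y) ^ q = x ^ q + y ^ q"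
    and two_neq_zero: "(2::'a) \<noteq> 0"
    and alpha_nonsquare: "\<alpha> \<in> C1 q"
    and Z_square: "Z ^ 2 = \<alpha>"
begin

lemma self_eq_neg_iff: "(x::'a) = - x \<longleftrightarrow> x = 0"
  using two_neq_zero by (simp add: eq_neg_iff_add_eq_0 flip: mult_2)

lemma neg_eq_self_iff: "- (x::'a) = x \<longleftrightarrow> x = 0"
  using self_eq_neg_iff by auto

lemma four_neq_zero: "(4::'a) \<noteq> 0"
  using two_neq_zero mult_eq_0_iff[of "2::'a" 2] by simp

lemma q_pos: "q > 0"
  using card_UNIV finite_UNIV_card_ge_0[where 'a='a] by (cases q) auto

lemma q_odd: "odd q"
proof
  assume "even q"
  with q_pos frobenius_add[of 1 "- 1"] have "(2::'a) = 0" by (simp add: zero_power)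
  with two_neq_zero show False ..
qed

lemma frobenius_mult: "(x * y :: 'a) ^ q = x ^ q * y ^ q"
  by (simp add: power_mult_distrib)

lemma frobenius_minus: "(- x :: 'a) ^ q = - (x ^ q)"
  using q_odd by (simp add: power_minus_odd)

lemma frobenius_diff: "(x - y :: 'a) ^ q = x ^ q - y ^ q"
  using frobenius_add[of x "- y"] frobenius_minus[of y] by simp

lemma frobenius_of_nat: "(of_nat n :: 'a) ^ q = of_nat n"
  by (induction n) (use q_pos frobenius_add[of 1] in simp_all)

lemma frobenius_numeral: "(numeral k :: 'a) ^ q = numeral k"
  using frobenius_of_nat[of "numeral k"] by simp

lemma frobenius_zero: "(0::'a) ^ q = 0"
  using q_pos by simp

lemma frobenius_divide: "(x / y :: 'a) ^ q = x ^ q / y ^ q"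
  by (simp add: power_divide)

lemma frobenius_power: "(x ^ n :: 'a) ^ q = (x ^ q) ^ n"
  by (simp add: power_mult[symmetric] mult.commute)

lemmas frobenius_simps = frobenius_add frobenius_mult frobenius_minus frobenius_diff
  frobenius_numeral frobenius_zero frobenius_divide frobenius_power[where n = "numeral k" for k]

lemma frobenius_frobenius: "((x::'a) ^ q) ^ q = x"
  using power_card_eq_self[of x] card_UNIV by (simp add: power_mult[symmetric] power2_eq_square)

lemma alpha_in_Fq: "\<alpha> ^ q = \<alpha>" and alpha_nonzero: "\<alpha> \<noteq> 0"
  and alpha_neq_square: "y ^ q = y \<Longrightarrow> \<alpha> \<noteq> y\<^sup>2"
  using alpha_nonsquare by (auto simp: mem_C1_iff)

lemma Z_nonzero: "Z \<noteq> 0"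
  using Z_square alpha_nonzero by auto

lemma frobenius_Z: "Z ^ q = - Z"
proof -
  have "(Z ^ q) ^ 2 = Z ^ 2"
    using Z_square alpha_in_Fq by (simp flip: frobenius_power)
  hence "(Z ^ q - Z) * (Z ^ q + Z) = 0" by (simp add: algebra_simps power2_eq_square)
  moreover have "Z ^ q \<noteq> Z" using alpha_neq_square[of Z] Z_square by auto
  ultimately show ?thesis by (simp add: eq_neg_iff_add_eq_0)
qed

lemma frobenius_coords: "a ^ q = a \<Longrightarrow> b ^ q = b \<Longrightarrow> (a + b * Z) ^ q = a - b * Z"
  using frobenius_Z by (simp add: frobenius_simps)

lemma coords_eq_iff:
  assumes "a ^ q = a" "b ^ q = b" "c ^ q = c" "e ^ q = e"
  shows "a + b * Z = c + e * Z \<longleftrightarrow> a = c \<and> b = e"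
proof
  assume eq: "a + b * Z = c + e * Z"
  have "a - b * Z = c - e * Z"
    using arg_cong[OF eq, of "\<lambda>x. x ^ q"] frobenius_coords assms by simp
  hence "(a + b * Z) - (a - b * Z) = (c + e * Z) - (c - e * Z)" using eq by simp
  hence "2 * (b * Z) = 2 * (e * Z)" by (simp add: algebra_simps)
  hence "b = e" using two_neq_zero Z_nonzero by simp
  with eq show "a = c \<and> b = e" by simp
qed simp

lemma coords_exist: "\<exists>a b. a ^ q = a \<and> b ^ q = b \<and> x = a + b * Z"
proof (intro exI conjI)
  show "((x + x ^ q) / 2) ^ q = (x + x ^ q) / 2"
    by (simp add: frobenius_add frobenius_divide frobenius_numeral frobenius_frobenius add.commute)
  have "((x - x ^ q) / (2 * Z)) ^ q = (x ^ q - x) / (2 * - Z)"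
    by (simp add: frobenius_diff frobenius_divide frobenius_mult frobenius_numeral
        frobenius_frobenius frobenius_Z)
  thus "((x - x ^ q) / (2 * Z)) ^ q = (x - x ^ q) / (2 * Z)"
    by (simp add: minus_divide_left)
  show "x = (x + x ^ q) / 2 + (x - x ^ q) / (2 * Z) * Z"
    using two_neq_zero four_neq_zero Z_nonzero by (simp add: field_simps)
qed

text \<open>\<open>x ^ (q + 2) = x ^ (q + 1) * x\<close>, and \<open>x ^ (q + 1)\<close> is the norm \<open>a\<^sup>2 - \<alpha> b\<^sup>2\<close>.\<close>
lemma power_q_plus_2_coords:
  assumes "a ^ q = a" "b ^ q = b"
  shows "(a + b * Z) ^ (q + 2) = (a\<^sup>2 - \<alpha> * b\<^sup>2) * (a + b * Z)"
proof -
  have "(a + b * Z) ^ (q + 2) = (a - b * Z) * (a + b * Z)\<^sup>2"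
    by (simp only: power_add frobenius_coords[OF assms])
  also have "\<dots> = (a\<^sup>2 - Z\<^sup>2 * b\<^sup>2) * (a + b * Z)" by (simp add: algebra_simps power2_eq_square)
  finally show ?thesis using Z_square by simp
qed

lemma power_q_plus_2_diff_eq_iff:
  assumes "a ^ q = a" "b ^ q = b" "c ^ q = c" "e ^ q = e" "s ^ q = s" "t ^ q = t"
  shows "(a + b * Z) ^ (q + 2) - (c + e * Z) ^ (q + 2) = s + t * Z
    \<longleftrightarrow> (a\<^sup>2 - \<alpha> * b\<^sup>2) * a - (c\<^sup>2 - \<alpha> * e\<^sup>2) * c = s
      \<and> (a\<^sup>2 - \<alpha> * b\<^sup>2) * b - (c\<^sup>2 - \<alpha> * e\<^sup>2) * e = t"
proof -
  have "(a + b * Z) ^ (q + 2) - (c + e * Z) ^ (q + 2)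
      = ((a\<^sup>2 - \<alpha> * b\<^sup>2) * a - (c\<^sup>2 - \<alpha> * e\<^sup>2) * c)
        + ((a\<^sup>2 - \<alpha> * b\<^sup>2) * b - (c\<^sup>2 - \<alpha> * e\<^sup>2) * e) * Z"
    unfolding power_q_plus_2_coords[OF assms(1,2)] power_q_plus_2_coords[OF assms(3,4)]
    by (simp add: algebra_simps)
  also have "\<dots> = s + t * Z \<longleftrightarrow> (a\<^sup>2 - \<alpha> * b\<^sup>2) * a - (c\<^sup>2 - \<alpha> * e\<^sup>2) * c = s
      \<and> (a\<^sup>2 - \<alpha> * b\<^sup>2) * b - (c\<^sup>2 - \<alpha> * e\<^sup>2) * e = t"
    using assms alpha_in_Fq by (intro coords_eq_iff) (simp_all add: frobenius_simps)
  finally show ?thesis .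
qed

lemma power_q_minus_1_Fq:
  assumes "(a::'a) ^ q = a" "a \<noteq> 0"
  shows "a ^ (q - 1) = 1"
proof -
  have "a * a ^ (q - 1) = a * 1" using q_pos assms(1) by (cases q) auto
  with assms(2) show ?thesis by (rule mult_left_cancel[THEN iffD1])
qed

lemma card_UNIV_minus_1: "card (UNIV :: 'a set) - 1 = (q - 1) * (q + 1)"
  using card_UNIV by (simp add: power2_eq_square algebra_simps)

lemma sqrt_of_C1:
  fixes a :: 'a
  assumes "a \<in> C1 q"
  shows "\<exists>r. r\<^sup>2 = a \<and> r ^ q = - r"
proof -
  have a: "a ^ q = a" "a \<noteq> 0" "\<And>y. y ^ q = y \<Longrightarrow> a \<noteq> y\<^sup>2" using assms by (auto simp: mem_C1_iff)
  have "even (q + 1)" using q_odd by simp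
  then obtain h where h: "q + 1 = 2 * h" by (rule evenE)
  have card_units: "card (UNIV :: 'a set) - 1 = 2 * ((q - 1) * h)"
    unfolding card_UNIV_minus_1 h by simp
  hence "(card (UNIV :: 'a set) - 1) div 2 = (q - 1) * h" by simp
  hence "a ^ ((card (UNIV :: 'a set) - 1) div 2) = (a ^ (q - 1)) ^ h"
    by (simp only: power_mult)
  also have "\<dots> = 1" using power_q_minus_1_Fq a by simp
  finally have "a ^ ((card (UNIV :: 'a set) - 1) div 2) = 1" .
  moreover have "2 dvd card (UNIV :: 'a set) - 1" unfolding card_units by simp
  ultimately obtain r where r: "r\<^sup>2 = a"
    using ex_nth_root_if_power_eq_1[OF zero_less_numeral] a(2) by blast
  have "(r ^ q)\<^sup>2 = r\<^sup>2" using r a(1) by (simp flip: frobenius_power)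
  hence "(r ^ q - r) * (r ^ q + r) = 0" by (simp add: algebra_simps power2_eq_square)
  moreover have "r ^ q \<noteq> r" using a(3) r by auto
  ultimately show ?thesis using r by (auto simp: eq_neg_iff_add_eq_0)
qed

lemma C1_mult_C1:
  fixes a b :: 'a
  assumes "a \<in> C1 q" "b \<in> C1 q"
  shows "a * b \<in> C0 q"
proof -
  obtain r where r: "r\<^sup>2 = a" "r ^ q = - r" using sqrt_of_C1 assms(1) by blast
  obtain s where s: "s\<^sup>2 = b" "s ^ q = - s" using sqrt_of_C1 assms(2) by blast
  have "a \<noteq> 0" "b \<noteq> 0" using assms by (auto simp: mem_C1_iff)
  with r s show ?thesis
    unfolding mem_C0_iff by (intro exI[of _ "r * s"]) (auto simp: frobenius_mult power_mult_distrib)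
qed

lemma C0_mult_C1:
  fixes a b :: 'a
  assumes "a \<in> C0 q" "b \<in> C1 q"
  shows "a * b \<in> C1 q"
proof -
  obtain y where y: "y ^ q = y" "y \<noteq> 0" "a = y\<^sup>2" using assms(1) by (auto simp: mem_C0_iff)
  have b: "b ^ q = b" "b \<noteq> 0" "\<And>u. u ^ q = u \<Longrightarrow> b \<noteq> u\<^sup>2" using assms(2) by (auto simp: mem_C1_iff)
  show ?thesis
    unfolding mem_C1_iff
  proof (intro conjI allI impI notI)
    fix u assume "u ^ q = u" "a * b = u\<^sup>2"
    hence "(u / y) ^ q = u / y" "b = (u / y)\<^sup>2"
      using y by (auto simp: frobenius_divide power_divide field_simps)
    with b(3) show False by blast
  qed (use y b in \<open>simp_all add: frobenius_simps\<close>)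
qed

text \<open>A cube root \<open>s\<^sub>0\<close> exists by Euler's criterion; its norm \<open>N = s\<^sub>0 s\<^sub>0 ^ q\<close> satisfies
  \<open>N\<^sup>3 = k\<^sup>3\<close>, and multiplying \<open>s\<^sub>0\<close> by the cube root of unity \<open>N / k\<close> corrects the norm to \<open>k\<close>.\<close>
lemma cube_root_with_norm:
  fixes w k :: 'a
  assumes "3 dvd q - 1" "w \<noteq> 0" "w ^ (q + 1) = k ^ 3" "k ^ q = k" "k \<noteq> 0"
  shows "\<exists>s. s ^ 3 = w \<and> s * s ^ q = k"
proof -
  obtain h where h: "q - 1 = 3 * h" using assms(1) by (elim dvdE)
  have card_units: "card (UNIV :: 'a set) - 1 = 3 * ((q + 1) * h)"
    using card_UNIV_minus_1 h by simp
  hence "(card (UNIV :: 'a set) - 1) div 3 = (q + 1) * h" by simp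
  hence "w ^ ((card (UNIV :: 'a set) - 1) div 3) = (w ^ (q + 1)) ^ h"
    by (simp only: power_mult)
  also have "\<dots> = k ^ (q - 1)" using assms(3) h by (simp flip: power_mult)
  also have "\<dots> = 1" using power_q_minus_1_Fq assms by simp
  finally have "w ^ ((card (UNIV :: 'a set) - 1) div 3) = 1" .
  moreover have "3 dvd card (UNIV :: 'a set) - 1" unfolding card_units by simp
  ultimately obtain s\<^sub>0 where s\<^sub>0: "s\<^sub>0 ^ 3 = w"
    using ex_nth_root_if_power_eq_1[OF zero_less_numeral] assms(2) by blast
  define \<omega> where "\<omega> = s\<^sub>0 * s\<^sub>0 ^ q / k"
  have "(s\<^sub>0 * s\<^sub>0 ^ q) ^ 3 = s\<^sub>0 ^ 3 * (s\<^sub>0 ^ 3) ^ q"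
    by (simp add: frobenius_power power_mult_distrib)
  hence "(s\<^sub>0 * s\<^sub>0 ^ q) ^ 3 = w ^ (q + 1)" using s\<^sub>0 by (simp add: mult.commute)
  hence \<omega>_cube: "\<omega> ^ 3 = 1" using assms(3,5) by (simp add: \<omega>_def power_divide)
  have \<omega>_Fq: "\<omega> ^ q = \<omega>"
    using assms(4) frobenius_frobenius by (simp add: \<omega>_def frobenius_simps mult.commute)
  show ?thesis
  proof (intro exI conjI)
    show "(s\<^sub>0 * \<omega>) ^ 3 = w" using s\<^sub>0 \<omega>_cube by (simp add: power_mult_distrib)
    have "(s\<^sub>0 * \<omega>) * (s\<^sub>0 * \<omega>) ^ q = (s\<^sub>0 * s\<^sub>0 ^ q) * \<omega>\<^sup>2"
      using \<omega>_Fq by (simp add: frobenius_mult power2_eq_square)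
    also have "s\<^sub>0 * s\<^sub>0 ^ q = k * \<omega>" using assms(5) by (simp add: \<omega>_def)
    finally have "(s\<^sub>0 * \<omega>) * (s\<^sub>0 * \<omega>) ^ q = k * \<omega> ^ 3"
      by (simp add: power2_eq_square power3_eq_cube)
    thus "(s\<^sub>0 * \<omega>) * (s\<^sub>0 * \<omega>) ^ q = k" using \<omega>_cube by simp
  qed
qed

definition sqrts_Fq :: "'a \<Rightarrow> 'a set" where
  "sqrts_Fq D = {u. u ^ q = u \<and> u\<^sup>2 = D}"

lemma sqrts_Fq_square:
  assumes "v ^ q = v"
  shows "sqrts_Fq (v\<^sup>2) = {v, - v}"
proof (intro Set.set_eqI iffI)
  fix u assume "u \<in> sqrts_Fq (v\<^sup>2)"
  hence "(u - v) * (u + v) = 0" by (simp add: sqrts_Fq_def algebra_simps power2_eq_square)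
  thus "u \<in> {v, - v}" by (auto simp: eq_neg_iff_add_eq_0)
qed (use assms in \<open>auto simp: sqrts_Fq_def frobenius_minus\<close>)

lemma card_sqrts_Fq_C0:
  assumes "D \<in> C0 q"
  shows "card (sqrts_Fq D) = 2"
proof -
  obtain v where v: "D = v\<^sup>2" "v ^ q = v" "v \<noteq> 0" using assms by (auto simp: mem_C0_iff)
  hence "v \<noteq> - v" by (simp add: self_eq_neg_iff)
  thus ?thesis using v by (simp add: sqrts_Fq_square)
qed

lemma sqrts_Fq_C1: "D \<in> C1 q \<Longrightarrow> sqrts_Fq D = {}"
  by (auto simp: mem_C1_iff sqrts_Fq_def)

lemma power_q_plus_2_minus: "(- x :: 'a) ^ (q + 2) = - (x ^ (q + 2))"
  using q_odd by (simp add: power_minus_odd)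

end

section \<open>Characteristic 5\<close>

text \<open>\<open>24 dvd q - 1\<close> holds for \<open>q = 25 ^ k\<close>; it makes \<open>2\<close> a square in \<open>F\<^sub>q\<close> and provides the cube
  roots needed for Cardano's formula.\<close>
locale char5_extension = quadratic_extension q \<alpha> Z for q and \<alpha> Z :: "'a::{field,finite}" +
  assumes five_eq_zero: "(5::'a) = 0"
    and q_mod_24: "24 dvd q - 1"
begin

lemma minus_two_eq_three: "- 2 = (3::'a)"
proof -
  have "(3::'a) = 5 - 2" by simp
  with five_eq_zero show ?thesis by simp
qed

lemma two_mult_add_eq_0_imp: "2 * x + y = 0 \<Longrightarrow> y = 3 * (x::'a)"
  by (simp add: add_eq_0_iff flip: minus_two_eq_three)

lemma three_neq_zero: "(3::'a) \<noteq> 0"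
  using two_neq_zero by (simp flip: minus_two_eq_three)

lemma sixteen_eq_one: "(16::'a) = 1"
proof -
  have "(16::'a) = 1 + 3 * 5" by simp
  with five_eq_zero show ?thesis by simp
qed

text \<open>Since \<open>2\<^sup>4 = 1\<close> and \<open>8\<close> divides \<open>q - 1\<close>, both \<open>2 ^ ((q\<^sup>2 - 1) / 2)\<close> and \<open>r ^ (q - 1)\<close> for
  a square root \<open>r\<close> of \<open>2\<close> are powers of \<open>2\<^sup>4\<close>.\<close>
lemma sqrt_two_Fq: "\<exists>r::'a. r ^ q = r \<and> r\<^sup>2 = 2"
proof -
  obtain t where t: "q - 1 = 24 * t" using q_mod_24 by (elim dvdE)
  have card_units: "card (UNIV :: 'a set) - 1 = 2 * (4 * (3 * t * (q + 1)))"
    unfolding card_UNIV_minus_1 t by simp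
  hence "(card (UNIV :: 'a set) - 1) div 2 = 4 * (3 * t * (q + 1))" by simp
  hence "(2::'a) ^ ((card (UNIV :: 'a set) - 1) div 2) = (2 ^ 4) ^ (3 * t * (q + 1))"
    by (simp only: power_mult)
  also have "\<dots> = 1" using sixteen_eq_one by simp
  finally have "(2::'a) ^ ((card (UNIV :: 'a set) - 1) div 2) = 1" .
  moreover have "2 dvd card (UNIV :: 'a set) - 1" unfolding card_units by simp
  ultimately obtain r :: 'a where r: "r\<^sup>2 = 2"
    using ex_nth_root_if_power_eq_1[OF zero_less_numeral] two_neq_zero by blast
  have "r ^ (q - 1) = ((r\<^sup>2) ^ 4) ^ (3 * t)" unfolding t by (simp flip: power_mult)
  also have "\<dots> = 1" using r sixteen_eq_one by simp
  finally have "r * r ^ (q - 1) = r" by simp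
  hence "r ^ q = r" using q_pos by (cases q) auto
  with r show ?thesis by blast
qed

lemma two_alpha_mult_C0: "D \<in> C0 q \<Longrightarrow> 2 * \<alpha> * D \<in> C1 q"
  and two_alpha_mult_C1: "D \<in> C1 q \<Longrightarrow> 2 * \<alpha> * D \<in> C0 q"
proof -
  obtain r :: 'a where "r ^ q = r" "r\<^sup>2 = 2" using sqrt_two_Fq by blast
  with two_neq_zero have "(2::'a) \<in> C0 q" unfolding mem_C0_iff by (intro exI[of _ r]) auto
  hence "2 * \<alpha> \<in> C1 q" using alpha_nonsquare by (rule C0_mult_C1)
  thus "D \<in> C0 q \<Longrightarrow> 2 * \<alpha> * D \<in> C1 q" "D \<in> C1 q \<Longrightarrow> 2 * \<alpha> * D \<in> C0 q"
    using C0_mult_C1[of D "2 * \<alpha>"] C1_mult_C1[of "2 * \<alpha>" D] by (simp_all add: mult.commute)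
qed

text \<open>With \<open>r\<^sup>2 = 2\<close> we have \<open>3 = 8 = (2 r)\<^sup>2\<close>, so \<open>e \<noteq> 0\<close> would make \<open>\<alpha> = (2 r A / e)\<^sup>2\<close> a square.\<close>
lemma alpha_square_eq_three_square:
  fixes A e :: 'a
  assumes "A ^ q = A" "e ^ q = e" "\<alpha> * e\<^sup>2 = 3 * A\<^sup>2"
  shows "e = 0 \<and> A = 0"
proof -
  obtain r :: 'a where r: "r ^ q = r" "r\<^sup>2 = 2" using sqrt_two_Fq by blast
  have "e = 0"
  proof (rule ccontr)
    assume "e \<noteq> 0"
    have "(8::'a) = 3 + 5" by simp
    hence "\<alpha> = 8 * A\<^sup>2 / e\<^sup>2" using assms(3) \<open>e \<noteq> 0\<close> five_eq_zero by (simp add: field_simps)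
    also have "\<dots> = (2 * r * A / e)\<^sup>2" using r(2) by (simp add: power_divide power_mult_distrib)
    finally show False
      using alpha_neq_square[of "2 * r * A / e"] r(1) assms(1,2) by (simp add: frobenius_simps)
  qed
  with assms(3) three_neq_zero show ?thesis by simp
qed

text \<open>The identity below shows \<open>A\<^sup>2 = C\<^sup>2\<close> unless \<open>2 A\<^sup>2 + \<alpha> e\<^sup>2 = 0\<close>, i.e. \<open>\<alpha> e\<^sup>2 = 3 A\<^sup>2\<close>.\<close>
lemma eq_or_eq_neg_if_same_product_and_form:
  assumes Fq: "A ^ q = A" "b ^ q = b" "C ^ q = C" "e ^ q = e"
    and prod: "A * b = C * e"
    and form: "2 * A\<^sup>2 - \<alpha> * b\<^sup>2 = 2 * C\<^sup>2 - \<alpha> * e\<^sup>2"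
  shows "(C = A \<and> e = b) \<or> (C = - A \<and> e = - b)"
proof -
  have "(2 * A\<^sup>2 - 2 * C\<^sup>2) * (2 * A\<^sup>2 + \<alpha> * e\<^sup>2)
      = 2 * A\<^sup>2 * ((2 * A\<^sup>2 - \<alpha> * b\<^sup>2) - (2 * C\<^sup>2 - \<alpha> * e\<^sup>2)) + 2 * \<alpha> * ((A * b)\<^sup>2 - (C * e)\<^sup>2)"
    by (simp add: algebra_simps power2_eq_square)
  also have "\<dots> = 0" using prod form by simp
  finally have "2 * (A\<^sup>2 - C\<^sup>2) = 0 \<or> 2 * A\<^sup>2 + \<alpha> * e\<^sup>2 = 0"
    by (simp add: right_diff_distrib)
  then consider "2 * A\<^sup>2 + \<alpha> * e\<^sup>2 = 0" | "A\<^sup>2 = C\<^sup>2"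
    using two_neq_zero by auto
  thus ?thesis
  proof cases
    case 1
    hence "\<alpha> * e\<^sup>2 = 3 * A\<^sup>2" by (rule two_mult_add_eq_0_imp)
    hence "e = 0 \<and> A = 0" using alpha_square_eq_three_square Fq(1,4) by blast
    moreover have "2 * C\<^sup>2 + \<alpha> * b\<^sup>2 = (2 * C\<^sup>2 - \<alpha> * e\<^sup>2) - (2 * A\<^sup>2 - \<alpha> * b\<^sup>2) + 2 * A\<^sup>2 + \<alpha> * e\<^sup>2"
      by (simp add: algebra_simps)
    with form calculation have "2 * C\<^sup>2 + \<alpha> * b\<^sup>2 = 0" by simp
    hence "\<alpha> * b\<^sup>2 = 3 * C\<^sup>2" by (rule two_mult_add_eq_0_imp)
    hence "b = 0 \<and> C = 0" using alpha_square_eq_three_square Fq(2,3) by blast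
    ultimately show ?thesis by simp
  next
    case 2
    with form have "\<alpha> * b\<^sup>2 = \<alpha> * e\<^sup>2" by simp
    hence "b\<^sup>2 = e\<^sup>2" using alpha_nonzero by simp
    with 2 have "C = A \<or> C = - A" "e = b \<or> e = - b" by (auto simp: power2_eq_iff)
    thus ?thesis using prod by (auto simp: self_eq_neg_iff neg_eq_self_iff)
  qed
qed

text \<open>In coordinates \<open>x = a + b Z\<close>, \<open>y = c + e Z\<close>, the two equations yield \<open>A b = C e\<close> and
  \<open>2 A\<^sup>2 - \<alpha> b\<^sup>2 = 2 C\<^sup>2 - \<alpha> e\<^sup>2\<close> for \<open>A = 2 a + 1\<close>, \<open>C = 2 c + 1\<close>; the sign \<open>C = A\<close> would force
  \<open>y = x\<close>.\<close>
lemma boomerang_pair_coords: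
  assumes ab: "a ^ q = a" "b ^ q = b" and ce: "c ^ q = c" "e ^ q = e" and d: "d ^ q = d" "d \<noteq> 0"
    and eq0: "(a + b * Z) ^ (q + 2) - (c + e * Z) ^ (q + 2) = 3 * d * Z"
    and eq1: "(a + b * Z + 1) ^ (q + 2) - (c + e * Z + 1) ^ (q + 2) = 3 * d * Z"
  shows "2 * c + 1 = - (2 * a + 1) \<and> e = - b"
proof -
  have Fq: "(a + 1) ^ q = a + 1" "(c + 1) ^ q = c + 1" "(0::'a) ^ q = 0" "(3 * d) ^ q = 3 * d"
    using ab ce d q_pos by (simp_all add: frobenius_simps)
  define N where "N u v = u\<^sup>2 - \<alpha> * v\<^sup>2" for u v :: 'a
  from eq0 have R0: "N a b * a - N c e * c = 0" and I0: "N a b * b - N c e * e = 3 * d"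
    using power_q_plus_2_diff_eq_iff[OF ab ce Fq(3,4)] unfolding N_def by simp_all
  have "a + b * Z + 1 = (a + 1) + b * Z" "c + e * Z + 1 = (c + 1) + e * Z" by simp_all
  with eq1 have R1: "N (a + 1) b * (a + 1) - N (c + 1) e * (c + 1) = 0"
    and I1: "N (a + 1) b * b - N (c + 1) e * e = 3 * d"
    using power_q_plus_2_diff_eq_iff[OF Fq(1) ab(2) Fq(2) ce(2) Fq(3,4)] unfolding N_def by simp_all
  define A C where "A = 2 * a + 1" and "C = 2 * c + 1"
  have "A * b - C * e = (N (a + 1) b * b - N (c + 1) e * e) - (N a b * b - N c e * e)"
    by (simp add: A_def C_def N_def algebra_simps power2_eq_square)
  hence prod: "A * b = C * e" using I0 I1 by simp
  have "(2 * A\<^sup>2 - \<alpha> * b\<^sup>2) - (2 * C\<^sup>2 - \<alpha> * e\<^sup>2)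
      = (N (a + 1) b * (a + 1) - N (c + 1) e * (c + 1)) - (N a b * a - N c e * c)
        + 5 * (a + a\<^sup>2 - c - c\<^sup>2)"
    by (simp add: A_def C_def N_def algebra_simps power2_eq_square)
  hence form: "2 * A\<^sup>2 - \<alpha> * b\<^sup>2 = 2 * C\<^sup>2 - \<alpha> * e\<^sup>2" using R0 R1 five_eq_zero by simp
  have "A ^ q = A" "C ^ q = C" using ab ce by (simp_all add: A_def C_def frobenius_simps)
  with ab ce prod form have "(C = A \<and> e = b) \<or> (C = - A \<and> e = - b)"
    by (intro eq_or_eq_neg_if_same_product_and_form)
  moreover have "\<not> (C = A \<and> e = b)"
  proof
    assume "C = A \<and> e = b"
    hence "c = a \<and> e = b" using two_neq_zero by (simp add: A_def C_def)
    with I0 d(2) three_neq_zero show False by simp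
  qed
  ultimately have "C = - A \<and> e = - b" by blast
  thus ?thesis by (simp only: A_def C_def)
qed

lemma boomerang_pair_shape:
  assumes "d ^ q = d" "d \<noteq> 0"
    and "x ^ (q + 2) - y ^ (q + 2) = 3 * d * Z"
    and "(x + 1) ^ (q + 2) - (y + 1) ^ (q + 2) = 3 * d * Z"
  shows "y = - x - 1"
proof -
  obtain a b where ab: "a ^ q = a" "b ^ q = b" "x = a + b * Z" using coords_exist by blast
  obtain c e where ce: "c ^ q = c" "e ^ q = e" "y = c + e * Z" using coords_exist by blast
  have C: "2 * c + 1 = - (2 * a + 1)" and "e = - b"
    using boomerang_pair_coords[OF ab(1,2) ce(1,2) assms(1,2) assms(3,4)[unfolded ab(3) ce(3)]]
    by blast+
  have "2 * (c + a + 1) = (2 * c + 1) + (2 * a + 1)" by (simp add: algebra_simps)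
  also have "\<dots> = 0" unfolding C by simp
  finally have "c + a + 1 = 0" using two_neq_zero mult_eq_0_iff by blast
  moreover have "y = - x - 1 + (c + a + 1)" using \<open>e = - b\<close> ab(3) ce(3) by (simp add: algebra_simps)
  ultimately show ?thesis by simp
qed

lemma beta_f_eq_card_sum_fibre:
  assumes "d ^ q = d" "d \<noteq> 0"
  shows "beta_f (\<lambda>x. x ^ (q + 2)) 1 (3 * d * Z)
    = card {x. x ^ (q + 2) + (x + 1) ^ (q + 2) = 3 * d * Z}"
proof -
  define f :: "'a \<Rightarrow> 'a" where "f = (\<lambda>x. x ^ (q + 2))"
  have minus: "f (- x - 1) = - f (x + 1)" "f (- x - 1 + 1) = - f x" for x
  proof -
    have "- x - 1 = - (x + 1)" "- x - 1 + 1 = - x" by simp_all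
    thus "f (- x - 1) = - f (x + 1)" "f (- x - 1 + 1) = - f x"
      by (simp_all only: f_def power_q_plus_2_minus)
  qed
  have shape: "y = - x - 1" if "f x - f y = 3 * d * Z" "f (x + 1) - f (y + 1) = 3 * d * Z" for x y
    using boomerang_pair_shape[OF assms] that unfolding f_def by blast
  have "{(x, y). f x - f y = 3 * d * Z \<and> f (x + 1) - f (y + 1) = 3 * d * Z}
      = (\<lambda>x. (x, - x - 1)) ` {x. f x + f (x + 1) = 3 * d * Z}"
  proof (intro Set.set_eqI iffI)
    fix p assume "p \<in> {(x, y). f x - f y = 3 * d * Z \<and> f (x + 1) - f (y + 1) = 3 * d * Z}"
    then obtain x y where p: "p = (x, y)" "f x - f y = 3 * d * Z" "f (x + 1) - f (y + 1) = 3 * d * Z"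
      by blast
    with shape have "y = - x - 1" by blast
    with p minus show "p \<in> (\<lambda>x. (x, - x - 1)) ` {x. f x + f (x + 1) = 3 * d * Z}" by auto
  next
    fix p assume "p \<in> (\<lambda>x. (x, - x - 1)) ` {x. f x + f (x + 1) = 3 * d * Z}"
    then obtain x where "p = (x, - x - 1)" "f x + f (x + 1) = 3 * d * Z" by blast
    with minus show "p \<in> {(x, y). f x - f y = 3 * d * Z \<and> f (x + 1) - f (y + 1) = 3 * d * Z}"
      by (simp add: add.commute)
  qed
  moreover have "inj (\<lambda>x::'a. (x, - x - 1))" by (rule injI) simp
  ultimately have "beta_f f 1 (3 * d * Z) = card {x. f x + f (x + 1) = 3 * d * Z}"
    unfolding beta_f_def by (simp add: card_image inj_on_subset)
  thus ?thesis by (simp only: f_def)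
qed

text \<open>In characteristic 5 the centre \<open>-1/2\<close> of the symmetry \<open>x \<mapsto> -x-1\<close> is \<open>2\<close>, so we write
  \<open>x = 2 (e + 1) + b Z\<close>; the polynomial identities below hold up to multiples of \<open>5\<close>.\<close>
lemma power_q_plus_2_sum_coords:
  assumes "e ^ q = e" "b ^ q = b"
  shows "(2 * (e + 1) + b * Z) ^ (q + 2) + (2 * (e + 1) + b * Z + 1) ^ (q + 2)
    = e * (e\<^sup>2 + \<alpha> * b\<^sup>2 + 3) + 3 * b * (e\<^sup>2 + \<alpha> * b\<^sup>2 + 1) * Z"
proof -
  have Fq: "(2 * (e + 1)) ^ q = 2 * (e + 1)" "(2 * (e + 1) + 1) ^ q = 2 * (e + 1) + 1"
    using assms by (simp_all add: frobenius_simps)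
  have "2 * (e + 1) + b * Z + 1 = (2 * (e + 1) + 1) + b * Z" by simp
  hence "(2 * (e + 1) + b * Z) ^ (q + 2) + (2 * (e + 1) + b * Z + 1) ^ (q + 2)
      = ((2 * (e + 1))\<^sup>2 - \<alpha> * b\<^sup>2) * (2 * (e + 1) + b * Z)
        + ((2 * (e + 1) + 1)\<^sup>2 - \<alpha> * b\<^sup>2) * ((2 * (e + 1) + 1) + b * Z)"
    by (simp only: power_q_plus_2_coords[OF Fq(1) assms(2)] power_q_plus_2_coords[OF Fq(2) assms(2)])
  also have "\<dots> = e * (e\<^sup>2 + \<alpha> * b\<^sup>2 + 3) + 3 * b * (e\<^sup>2 + \<alpha> * b\<^sup>2 + 1) * Z
      + 5 * ((7 - \<alpha> * b\<^sup>2 + 15 * e - e * \<alpha> * b\<^sup>2 + 12 * e\<^sup>2 + 3 * e ^ 3)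
             + (2 * b - \<alpha> * b ^ 3 + 4 * e * b + e\<^sup>2 * b) * Z)"
    by (simp add: algebra_simps power2_eq_square power3_eq_cube)
  finally show ?thesis using five_eq_zero by simp
qed

lemma sum_coords_equations_iff:
  "e * (e\<^sup>2 + \<alpha> * b\<^sup>2 + 3) = 0 \<and> b * (e\<^sup>2 + \<alpha> * b\<^sup>2 + 1) = d
    \<longleftrightarrow> (e \<noteq> 0 \<and> b = 2 * d \<and> e\<^sup>2 = \<alpha> * d\<^sup>2 + 2) \<or> (e = 0 \<and> \<alpha> * b ^ 3 + b = d)"
proof (cases "e = 0")
  case True
  then show ?thesis by (simp add: algebra_simps power2_eq_square power3_eq_cube)
next
  case False
  show ?thesis
  proof
    assume "e * (e\<^sup>2 + \<alpha> * b\<^sup>2 + 3) = 0 \<and> b * (e\<^sup>2 + \<alpha> * b\<^sup>2 + 1) = d"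
    with False have E: "e\<^sup>2 + \<alpha> * b\<^sup>2 + 3 = 0" and d: "b * (e\<^sup>2 + \<alpha> * b\<^sup>2 + 1) = d" by auto
    have "b * (e\<^sup>2 + \<alpha> * b\<^sup>2 + 1) = 3 * b + b * (e\<^sup>2 + \<alpha> * b\<^sup>2 + 3) - 5 * b"
      by (simp add: algebra_simps)
    with E d five_eq_zero have "d = 3 * b" by simp
    hence "2 * d = b + 5 * b" by simp
    hence b: "b = 2 * d" using five_eq_zero by simp
    have "e\<^sup>2 = \<alpha> * d\<^sup>2 + 2 + (e\<^sup>2 + \<alpha> * (2 * d)\<^sup>2 + 3) - 5 * (\<alpha> * d\<^sup>2 + 1)"
      by (simp add: algebra_simps power2_eq_square)
    with E b five_eq_zero have "e\<^sup>2 = \<alpha> * d\<^sup>2 + 2" by simp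
    with False b show "(e \<noteq> 0 \<and> b = 2 * d \<and> e\<^sup>2 = \<alpha> * d\<^sup>2 + 2) \<or> (e = 0 \<and> \<alpha> * b ^ 3 + b = d)"
      by simp
  next
    assume "(e \<noteq> 0 \<and> b = 2 * d \<and> e\<^sup>2 = \<alpha> * d\<^sup>2 + 2) \<or> (e = 0 \<and> \<alpha> * b ^ 3 + b = d)"
    with False have b: "b = 2 * d" and e: "e\<^sup>2 = \<alpha> * d\<^sup>2 + 2" by auto
    have "e\<^sup>2 + \<alpha> * b\<^sup>2 + 3 = 5 * (\<alpha> * d\<^sup>2 + 1)"
      "b * (e\<^sup>2 + \<alpha> * b\<^sup>2 + 1) = d + 5 * (2 * \<alpha> * d ^ 3 + d)"
      unfolding b e by (simp_all add: algebra_simps power2_eq_square power3_eq_cube)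
    with five_eq_zero show "e * (e\<^sup>2 + \<alpha> * b\<^sup>2 + 3) = 0 \<and> b * (e\<^sup>2 + \<alpha> * b\<^sup>2 + 1) = d" by simp
  qed
qed

lemma shifted_coords_exist: "\<exists>e b. e ^ q = e \<and> b ^ q = b \<and> x = 2 * (e + 1) + b * Z"
proof -
  obtain a b where "a ^ q = a" "b ^ q = b" "x = a + b * Z" using coords_exist by blast
  with two_neq_zero show ?thesis by (intro exI[of _ "a / 2 - 1"] exI[of _ b]) (simp add: frobenius_simps)
qed

lemma shifted_coords_eq_iff:
  assumes "e ^ q = e" "b ^ q = b" "e' ^ q = e'" "b' ^ q = b'"
  shows "2 * (e + 1) + b * Z = 2 * (e' + 1) + b' * Z \<longleftrightarrow> e = e' \<and> b = b'"
  using coords_eq_iff[of "2 * (e + 1)" b "2 * (e' + 1)" b'] assms two_neq_zero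
  by (simp add: frobenius_simps)

lemma shifted_coords_in_sum_fibre_iff:
  assumes "e ^ q = e" "b ^ q = b" "d ^ q = d"
  shows "(2 * (e + 1) + b * Z) ^ (q + 2) + (2 * (e + 1) + b * Z + 1) ^ (q + 2) = 3 * d * Z
    \<longleftrightarrow> (e \<noteq> 0 \<and> b = 2 * d \<and> e\<^sup>2 = \<alpha> * d\<^sup>2 + 2) \<or> (e = 0 \<and> \<alpha> * b ^ 3 + b = d)"
proof -
  have "(2 * (e + 1) + b * Z) ^ (q + 2) + (2 * (e + 1) + b * Z + 1) ^ (q + 2) = 3 * d * Z
      \<longleftrightarrow> e * (e\<^sup>2 + \<alpha> * b\<^sup>2 + 3) + 3 * b * (e\<^sup>2 + \<alpha> * b\<^sup>2 + 1) * Z = 0 + (3 * d) * Z"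
    unfolding power_q_plus_2_sum_coords[OF assms(1,2)] by (simp add: mult.assoc)
  also have "\<dots> \<longleftrightarrow> e * (e\<^sup>2 + \<alpha> * b\<^sup>2 + 3) = 0 \<and> 3 * b * (e\<^sup>2 + \<alpha> * b\<^sup>2 + 1) = 3 * d"
    using assms alpha_in_Fq by (intro coords_eq_iff) (simp_all add: frobenius_simps)
  also have "\<dots> \<longleftrightarrow> e * (e\<^sup>2 + \<alpha> * b\<^sup>2 + 3) = 0 \<and> b * (e\<^sup>2 + \<alpha> * b\<^sup>2 + 1) = d"
    using three_neq_zero by (simp add: mult.assoc)
  also have "\<dots> \<longleftrightarrow> (e \<noteq> 0 \<and> b = 2 * d \<and> e\<^sup>2 = \<alpha> * d\<^sup>2 + 2) \<or> (e = 0 \<and> \<alpha> * b ^ 3 + b = d)"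
    by (rule sum_coords_equations_iff)
  finally show ?thesis .
qed

definition cubic_roots :: "'a \<Rightarrow> 'a set" where
  "cubic_roots d = {b. b ^ q = b \<and> \<alpha> * b ^ 3 + b = d}"

lemma sum_fibre_eq:
  assumes d: "d ^ q = d"
  shows "{x. x ^ (q + 2) + (x + 1) ^ (q + 2) = 3 * d * Z}
    = (\<lambda>e. 2 * (e + 1) + 2 * d * Z) ` (sqrts_Fq (\<alpha> * d\<^sup>2 + 2) - {0})
      \<union> (\<lambda>b. 2 + b * Z) ` cubic_roots d"
    (is "?F = ?S \<union> ?R")
proof (intro Set.set_eqI)
  fix x
  obtain e b where eb: "e ^ q = e" "b ^ q = b" "x = 2 * (e + 1) + b * Z"
    using shifted_coords_exist by blast
  have "x \<in> ?F \<longleftrightarrow> (e \<noteq> 0 \<and> b = 2 * d \<and> e\<^sup>2 = \<alpha> * d\<^sup>2 + 2) \<or> (e = 0 \<and> \<alpha> * b ^ 3 + b = d)"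
    unfolding mem_Collect_eq eb(3) by (rule shifted_coords_in_sum_fibre_iff[OF eb(1,2) d])
  also have "\<dots> \<longleftrightarrow> x \<in> ?S \<union> ?R"
  proof -
    have "x \<in> ?S \<longleftrightarrow> (\<exists>e'\<in>sqrts_Fq (\<alpha> * d\<^sup>2 + 2) - {0}. 2 * (e' + 1) + 2 * d * Z = x)"
      by blast
    also have "\<dots> \<longleftrightarrow> (\<exists>e'\<in>sqrts_Fq (\<alpha> * d\<^sup>2 + 2) - {0}. e' = e \<and> 2 * d = b)"
      unfolding eb(3) using eb(1,2) d
      by (intro bex_cong refl shifted_coords_eq_iff) (auto simp: sqrts_Fq_def frobenius_simps)
    finally have S: "x \<in> ?S \<longleftrightarrow> e \<in> sqrts_Fq (\<alpha> * d\<^sup>2 + 2) - {0} \<and> b = 2 * d" by auto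
    have "x \<in> ?R \<longleftrightarrow> (\<exists>b'\<in>cubic_roots d. 2 * (0 + 1) + b' * Z = x)" by auto
    also have "\<dots> \<longleftrightarrow> (\<exists>b'\<in>cubic_roots d. 0 = e \<and> b' = b)"
      unfolding eb(3) using eb(1,2) q_pos
      by (intro bex_cong refl shifted_coords_eq_iff) (auto simp: cubic_roots_def)
    finally have R: "x \<in> ?R \<longleftrightarrow> e = 0 \<and> b \<in> cubic_roots d" by auto
    show ?thesis unfolding Un_iff S R using eb(1,2) by (auto simp: sqrts_Fq_def cubic_roots_def)
  qed
  finally show "x \<in> ?F \<longleftrightarrow> x \<in> ?S \<union> ?R" .
qed

lemma card_sum_fibre:
  assumes d: "d ^ q = d"
  shows "card {x. x ^ (q + 2) + (x + 1) ^ (q + 2) = 3 * d * Z}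
    = card (sqrts_Fq (\<alpha> * d\<^sup>2 + 2) - {0}) + card (cubic_roots d)"
proof -
  have "inj_on (\<lambda>e. 2 * (e + 1) + 2 * d * Z) (sqrts_Fq (\<alpha> * d\<^sup>2 + 2) - {0})"
    using two_neq_zero by (intro inj_onI) simp
  moreover have "inj_on (\<lambda>b. 2 + b * Z) (cubic_roots d)"
    using Z_nonzero by (intro inj_onI) simp
  moreover have "2 * (e + 1) + 2 * d * Z \<noteq> 2 + b * Z"
    if "e \<in> sqrts_Fq (\<alpha> * d\<^sup>2 + 2) - {0}" "b \<in> cubic_roots d" for e b
  proof
    assume "2 * (e + 1) + 2 * d * Z = 2 + b * Z"
    moreover have "e ^ q = e" "(2 * d) ^ q = 2 * d" "b ^ q = b"
      using that d by (auto simp: sqrts_Fq_def cubic_roots_def frobenius_simps)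
    ultimately have "e = 0" using shifted_coords_eq_iff[of e "2 * d" 0 b] q_pos by simp
    with that show False by simp
  qed
  hence "(\<lambda>e. 2 * (e + 1) + 2 * d * Z) ` (sqrts_Fq (\<alpha> * d\<^sup>2 + 2) - {0})
      \<inter> (\<lambda>b. 2 + b * Z) ` cubic_roots d = {}"
    by blast
  ultimately show ?thesis
    unfolding sum_fibre_eq[OF d] by (simp add: card_Un_disjoint card_image)
qed

subsection \<open>The cubic \<open>\<alpha> b\<^sup>3 + b = d\<close>\<close>

lemma discriminant_eq:
  "\<alpha> * (\<alpha> * r ^ 3 + r)\<^sup>2 + 2 = (\<alpha> * r\<^sup>2 + 2)\<^sup>2 * (\<alpha> * r\<^sup>2 - 2)"
proof -
  have "\<alpha> * (\<alpha> * r ^ 3 + r)\<^sup>2 + 2 = (\<alpha> * r\<^sup>2 + 2)\<^sup>2 * (\<alpha> * r\<^sup>2 - 2) + 5 * (2 + \<alpha> * r\<^sup>2)"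
    by (simp add: algebra_simps power2_eq_square power3_eq_cube)
  with five_eq_zero show ?thesis by simp
qed

text \<open>Dividing out a known root \<open>r\<close> leaves the quadratic \<open>\<alpha> b\<^sup>2 + \<alpha> r b + \<alpha> r\<^sup>2 + 1\<close>, whose
  roots are \<open>b = (u - \<alpha> r) / (2 \<alpha>)\<close> with \<open>u\<^sup>2 = 2 \<alpha> (\<alpha> r\<^sup>2 - 2)\<close>.\<close>
lemma cubic_roots_eq_insert:
  assumes r: "r \<in> cubic_roots d"
  shows "cubic_roots d = insert r ((\<lambda>u. (u - \<alpha> * r) / (2 * \<alpha>)) ` sqrts_Fq (2 * \<alpha> * (\<alpha> * r\<^sup>2 - 2)))"
proof -
  have rq: "r ^ q = r" and rd: "\<alpha> * r ^ 3 + r = d" using r by (auto simp: cubic_roots_def)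
  have two_alpha: "2 * \<alpha> \<noteq> 0" using two_neq_zero alpha_nonzero by simp
  have root_iff: "\<alpha> * b ^ 3 + b = d \<longleftrightarrow> b = r \<or> (2 * \<alpha> * b + \<alpha> * r)\<^sup>2 = 2 * \<alpha> * (\<alpha> * r\<^sup>2 - 2)"
    for b
  proof -
    have "\<alpha> * b ^ 3 + b - d = (b - r) * (\<alpha> * b\<^sup>2 + \<alpha> * r * b + \<alpha> * r\<^sup>2 + 1)"
      unfolding rd[symmetric] by (simp add: algebra_simps power2_eq_square power3_eq_cube)
    moreover have "4 * \<alpha> * (\<alpha> * b\<^sup>2 + \<alpha> * r * b + \<alpha> * r\<^sup>2 + 1)
        = (2 * \<alpha> * b + \<alpha> * r)\<^sup>2 - 2 * \<alpha> * (\<alpha> * r\<^sup>2 - 2) + 5 * (\<alpha>\<^sup>2 * r\<^sup>2)"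
      by (simp add: algebra_simps power2_eq_square)
    ultimately show ?thesis
      using five_eq_zero four_neq_zero alpha_nonzero by (auto simp: right_minus_eq)
  qed
  have u_Fq: "(2 * \<alpha> * b + \<alpha> * r) ^ q = 2 * \<alpha> * b + \<alpha> * r \<longleftrightarrow> b ^ q = b" for b
  proof
    assume "(2 * \<alpha> * b + \<alpha> * r) ^ q = 2 * \<alpha> * b + \<alpha> * r"
    with rq alpha_in_Fq two_alpha show "b ^ q = b" by (simp add: frobenius_simps)
  qed (use rq alpha_in_Fq in \<open>simp add: frobenius_simps\<close>)
  have b_eq: "b = (u - \<alpha> * r) / (2 * \<alpha>) \<longleftrightarrow> u = 2 * \<alpha> * b + \<alpha> * r" for b u
    using two_alpha by (auto simp: field_simps)
  show ?thesis
  proof (intro Set.set_eqI iffI)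
    fix b assume "b \<in> cubic_roots d"
    thus "b \<in> insert r ((\<lambda>u. (u - \<alpha> * r) / (2 * \<alpha>)) ` sqrts_Fq (2 * \<alpha> * (\<alpha> * r\<^sup>2 - 2)))"
      using root_iff u_Fq b_eq by (auto simp: cubic_roots_def sqrts_Fq_def image_iff)
  next
    fix b assume "b \<in> insert r ((\<lambda>u. (u - \<alpha> * r) / (2 * \<alpha>)) ` sqrts_Fq (2 * \<alpha> * (\<alpha> * r\<^sup>2 - 2)))"
    thus "b \<in> cubic_roots d"
      using r root_iff u_Fq b_eq by (auto simp: cubic_roots_def sqrts_Fq_def)
  qed
qed

lemma square_three_alpha_r_neq:
  assumes "\<alpha> * r\<^sup>2 + 2 \<noteq> 0"
  shows "(3 * \<alpha> * r)\<^sup>2 \<noteq> 2 * \<alpha> * (\<alpha> * r\<^sup>2 - 2)"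
proof
  assume "(3 * \<alpha> * r)\<^sup>2 = 2 * \<alpha> * (\<alpha> * r\<^sup>2 - 2)"
  moreover have "(3 * \<alpha> * r)\<^sup>2 - 2 * \<alpha> * (\<alpha> * r\<^sup>2 - 2) = \<alpha> * (2 * (\<alpha> * r\<^sup>2 + 2)) + 5 * (\<alpha> * r)\<^sup>2"
    by (simp add: algebra_simps power2_eq_square)
  ultimately have "\<alpha> * (2 * (\<alpha> * r\<^sup>2 + 2)) = 0" using five_eq_zero by simp
  with alpha_nonzero two_neq_zero assms show False by (simp only: mult_eq_0_iff) blast
qed

text \<open>Both counts rest on \<open>\<alpha> d\<^sup>2 + 2 = (t + 2)\<^sup>2 (t - 2)\<close> for \<open>t = \<alpha> r\<^sup>2\<close>: the square class of
  \<open>\<alpha> d\<^sup>2 + 2\<close> is that of \<open>t - 2\<close>, and the discriminant \<open>2 \<alpha> (t - 2)\<close> lies in the other class.\<close>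
lemma cubic_roots_C0:
  assumes C0: "\<alpha> * d\<^sup>2 + 2 \<in> C0 q" and r: "r \<in> cubic_roots d"
  shows "cubic_roots d = {r}"
proof -
  obtain e where e: "e ^ q = e" "e \<noteq> 0" "e\<^sup>2 = \<alpha> * d\<^sup>2 + 2" using C0 by (auto simp: mem_C0_iff)
  have rq: "r ^ q = r" and rd: "\<alpha> * r ^ 3 + r = d" using r by (auto simp: cubic_roots_def)
  define t where "t = \<alpha> * r\<^sup>2"
  have disc: "e\<^sup>2 = (t + 2)\<^sup>2 * (t - 2)" using e(3) discriminant_eq[of r] rd by (simp add: t_def)
  with e(2) have "t + 2 \<noteq> 0" by auto
  with disc e(1,2) rq alpha_in_Fq have "t - 2 \<in> C0 q"
    unfolding mem_C0_iff
    by (intro exI[of _ "e / (t + 2)"]) (auto simp: t_def frobenius_simps power_divide)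
  hence "sqrts_Fq (2 * \<alpha> * (t - 2)) = {}" by (intro sqrts_Fq_C1 two_alpha_mult_C0)
  thus ?thesis using cubic_roots_eq_insert[OF r] by (simp add: t_def)
qed

lemma card_cubic_roots_C1:
  assumes C1: "\<alpha> * d\<^sup>2 + 2 \<in> C1 q" and r: "r \<in> cubic_roots d"
  shows "card (cubic_roots d) = 3"
proof -
  have rq: "r ^ q = r" and rd: "\<alpha> * r ^ 3 + r = d" using r by (auto simp: cubic_roots_def)
  define t where "t = \<alpha> * r\<^sup>2"
  have tq: "t ^ q = t" using rq alpha_in_Fq by (simp add: t_def frobenius_simps)
  have disc: "\<alpha> * d\<^sup>2 + 2 = (t + 2)\<^sup>2 * (t - 2)" using discriminant_eq[of r] rd by (simp add: t_def)
  have "\<alpha> * d\<^sup>2 + 2 \<noteq> 0" using C1 by (simp add: mem_C1_iff)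
  with disc have nz: "t + 2 \<noteq> 0" "t - 2 \<noteq> 0" by auto
  have "t - 2 \<in> C1 q"
    unfolding mem_C1_iff
  proof (intro conjI allI impI notI)
    fix y assume "y ^ q = y" "t - 2 = y\<^sup>2"
    hence "\<alpha> * d\<^sup>2 + 2 = ((t + 2) * y)\<^sup>2" "((t + 2) * y) ^ q = (t + 2) * y"
      using disc tq by (simp_all add: power_mult_distrib frobenius_simps)
    with C1 show False by (auto simp: mem_C1_iff)
  qed (use tq nz in \<open>simp_all add: frobenius_simps\<close>)
  hence D: "2 * \<alpha> * (t - 2) \<in> C0 q" by (rule two_alpha_mult_C1)
  define g where "g u = (u - \<alpha> * r) / (2 * \<alpha>)" for u
  have two_alpha: "2 * \<alpha> \<noteq> 0" using two_neq_zero alpha_nonzero by simp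
  have "inj_on g (sqrts_Fq (2 * \<alpha> * (t - 2)))" using two_alpha by (intro inj_onI) (simp add: g_def)
  hence "card (g ` sqrts_Fq (2 * \<alpha> * (t - 2))) = 2" by (simp add: card_image card_sqrts_Fq_C0[OF D])
  moreover have "r \<notin> g ` sqrts_Fq (2 * \<alpha> * (t - 2))"
  proof
    assume "r \<in> g ` sqrts_Fq (2 * \<alpha> * (t - 2))"
    then obtain u where "u\<^sup>2 = 2 * \<alpha> * (t - 2)" "r = g u" by (auto simp: sqrts_Fq_def)
    hence "u = 3 * \<alpha> * r" "u\<^sup>2 = 2 * \<alpha> * (t - 2)" using two_alpha by (auto simp: g_def field_simps)
    with square_three_alpha_r_neq nz(1) show False by (simp add: t_def)
  qed
  ultimately show ?thesis using cubic_roots_eq_insert[OF r] by (simp add: g_def[abs_def] t_def)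
qed

text \<open>Cardano's formula: \<open>b = s + s ^ q\<close>, where \<open>s\<^sup>3 = 3 (d / \<alpha> + e Z / \<alpha>\<^sup>2)\<close> and the cube root
  is normalized to have norm \<open>s ^ (q + 1) = 3 / \<alpha>\<close>.\<close>
lemma cubic_roots_nonempty:
  assumes d: "d ^ q = d" and e: "e ^ q = e" "e\<^sup>2 = \<alpha> * d\<^sup>2 + 2"
  shows "cubic_roots d \<noteq> {}"
proof -
  define w where "w = 3 * (d / \<alpha> + e * Z / \<alpha>\<^sup>2)"
  define k where "k = 3 / \<alpha>"
  have wq: "w ^ q = 3 * (d / \<alpha> - e * Z / \<alpha>\<^sup>2)"
    using d e alpha_in_Fq frobenius_Z by (simp add: w_def frobenius_simps)
  have kq: "k ^ q = k" and k0: "k \<noteq> 0"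
    using alpha_in_Fq three_neq_zero alpha_nonzero by (simp_all add: k_def frobenius_simps)
  have "w * w ^ q = 9 * ((d / \<alpha>)\<^sup>2 - (e * Z / \<alpha>\<^sup>2)\<^sup>2)"
    unfolding wq unfolding w_def by (simp add: algebra_simps power2_eq_square)
  also have "(e * Z / \<alpha>\<^sup>2)\<^sup>2 = e\<^sup>2 * Z\<^sup>2 / (\<alpha>\<^sup>2)\<^sup>2" by (simp add: power_divide power_mult_distrib)
  also have "\<dots> = (\<alpha> * d\<^sup>2 + 2) / \<alpha> ^ 3" unfolding e(2) Z_square using alpha_nonzero
    by (simp add: field_simps power2_eq_square power3_eq_cube)
  also have "9 * ((d / \<alpha>)\<^sup>2 - (\<alpha> * d\<^sup>2 + 2) / \<alpha> ^ 3) = k ^ 3 + 5 * (- 9 / \<alpha> ^ 3)"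
    using alpha_nonzero by (simp add: k_def field_simps power2_eq_square power3_eq_cube)
  finally have norm_w: "w ^ (q + 1) = k ^ 3" using five_eq_zero by (simp add: mult.commute)
  with k0 have "w \<noteq> 0" using q_pos by auto
  moreover have "3 dvd q - 1" using q_mod_24 by (rule dvd_trans[rotated]) simp
  ultimately obtain s where s: "s ^ 3 = w" "s * s ^ q = k"
    using cube_root_with_norm norm_w kq k0 by blast
  define b where "b = s + s ^ q"
  have bq: "b ^ q = b" using frobenius_frobenius by (simp add: b_def frobenius_add add.commute)
  have "b ^ 3 = s ^ 3 + (s ^ 3) ^ q + 3 * (s * s ^ q) * b"
    by (simp add: b_def frobenius_simps algebra_simps power2_eq_square power3_eq_cube)
  hence "\<alpha> * b ^ 3 + b = \<alpha> * (w + w ^ q) + (3 * \<alpha> * k + 1) * b"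
    using s by (simp add: algebra_simps)
  also have "\<dots> = d + 5 * (d + 2 * b)"
    unfolding wq unfolding w_def k_def using alpha_nonzero by (simp add: field_simps)
  finally have "\<alpha> * b ^ 3 + b = d" using five_eq_zero by simp
  with bq show ?thesis by (auto simp: cubic_roots_def)
qed

lemma beta_f_C0:
  assumes d: "d ^ q = d" "d \<noteq> 0" and C0: "\<alpha> * d\<^sup>2 + 2 \<in> C0 q"
  shows "beta_f (\<lambda>x. x ^ (q + 2)) 1 (3 * d * Z) = 3"
proof -
  obtain e where e: "e ^ q = e" "e\<^sup>2 = \<alpha> * d\<^sup>2 + 2" using C0 by (auto simp: mem_C0_iff)
  then obtain r where "r \<in> cubic_roots d" using cubic_roots_nonempty[OF d(1)] by blast
  hence "cubic_roots d = {r}" by (rule cubic_roots_C0[OF C0])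
  moreover have "0 \<notin> sqrts_Fq (\<alpha> * d\<^sup>2 + 2)"
    using C0 by (auto simp: mem_C0_iff sqrts_Fq_def)
  ultimately show ?thesis
    using beta_f_eq_card_sum_fibre[OF d] card_sum_fibre[OF d(1)] card_sqrts_Fq_C0[OF C0] by simp
qed

lemma beta_f_C1:
  assumes d: "d ^ q = d" "d \<noteq> 0" and C1: "\<alpha> * d\<^sup>2 + 2 \<in> C1 q"
  shows "beta_f (\<lambda>x. x ^ (q + 2)) 1 (3 * d * Z) \<in> {0, 3}"
proof -
  have "card (cubic_roots d) \<in> {0, 3}"
  proof (cases "cubic_roots d = {}")
    case False
    then obtain r where "r \<in> cubic_roots d" by blast
    thus ?thesis using card_cubic_roots_C1[OF C1] by simp
  qed simp
  thus ?thesis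
    using beta_f_eq_card_sum_fibre[OF d] card_sum_fibre[OF d(1)] sqrts_Fq_C1[OF C1] by simp
qed

end

lemma char5_extensionI:
  fixes \<alpha> Z :: "'a::{field,finite}"
  assumes q: "q = 5 ^ m" and "even m" and card: "card (UNIV :: 'a set) = q\<^sup>2"
    and "\<alpha> \<in> C1 q" and "Z\<^sup>2 = \<alpha>"
  shows "char5_extension q \<alpha> Z"
proof -
  have prime_char: "prime CHAR('a)" by (rule prime_CHAR_semidom[OF finite_imp_CHAR_pos]) simp
  have "CHAR('a) dvd 5 ^ (2 * m)"
    using CHAR_dvd_CARD[where 'a='a] card q by (simp add: power_mult[symmetric] mult.commute)
  hence "CHAR('a) dvd 5" by (rule prime_dvd_power[OF prime_char])
  hence char: "CHAR('a) = 5" using primes_dvd_imp_eq[OF prime_char] by simp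
  hence five: "(5::'a) = 0" using of_nat_CHAR[where 'a='a] by simp
  have "(2::'a) \<noteq> 0"
  proof
    assume "(2::'a) = 0"
    moreover have "(5::'a) = 2 * 2 + 1" by simp
    ultimately show False using five by simp
  qed
  moreover have "(x + y) ^ q = x ^ q + y ^ q" for x y :: 'a
    using q char by (intro freshmans_dream'[OF prime_char]) simp
  moreover have "24 dvd q - 1"
  proof -
    obtain k where "m = 2 * k" using \<open>even m\<close> by (elim evenE)
    hence "q = 25 ^ k" using q by (simp add: power_mult)
    moreover have "[(25::nat) ^ k = 1 ^ k] (mod 24)" by (rule cong_pow) (simp add: cong_def)
    hence "24 dvd (25::nat) ^ k - 1" by (intro cong_to_1_nat) simp
    ultimately show ?thesis by simp
  qed
  ultimately show ?thesis
    using assms five by unfold_locales simp_all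
qed

theorem lemma11:
  fixes m q :: nat and \<alpha> Z :: "'a::{field,finite}"
  assumes "q = 5 ^ m" and "even m"
    and "card (UNIV :: 'a set) = q ^ 2"
    and "\<alpha> \<in> C1 q"
    and "Z \<notin> subfield_q q" and "Z ^ 2 = \<alpha>"
  defines "f \<equiv> (\<lambda>x::'a. x ^ (q + 2))"
  defines "\<beta> \<equiv> (\<lambda>b::'a. beta_f f 1 (b / 4))"
  shows "\<forall>d \<in> subfield_q q - {0}.
           (d ^ 2 * \<alpha> + 2 \<in> C0 q \<longrightarrow> \<beta> (2 * d * Z) = 3) \<and>
           (d ^ 2 * \<alpha> + 2 \<in> C1 q \<longrightarrow> \<beta> (2 * d * Z) \<in> {0, 3})"
proof -
  interpret char5_extension q \<alpha> Z
    using assms(1-4,6) by (rule char5_extensionI)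
  show ?thesis
  proof (intro ballI)
    fix d :: 'a assume "d \<in> subfield_q q - {0}"
    hence d: "d ^ q = d" "d \<noteq> 0" by (auto simp: subfield_q_def)
    have "2 * d * Z = 4 * (3 * d * Z) - 5 * (2 * d * Z)" by simp
    hence "2 * d * Z / 4 = 3 * d * Z" using five_eq_zero four_neq_zero by simp
    hence "\<beta> (2 * d * Z) = beta_f (\<lambda>x. x ^ (q + 2)) 1 (3 * d * Z)"
      by (simp only: \<beta>_def f_def)
    thus "(d ^ 2 * \<alpha> + 2 \<in> C0 q \<longrightarrow> \<beta> (2 * d * Z) = 3) \<and>
          (d ^ 2 * \<alpha> + 2 \<in> C1 q \<longrightarrow> \<beta> (2 * d * Z) \<in> {0, 3})"
      using beta_f_C0[OF d] beta_f_C1[OF d] by (simp add: mult.commute)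
  qed
qed

end
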